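(* Let $P:\mathbb{R}^n\to\mathbb{R}$ be a nonzero nonnegative polynomial of degree at most $2$, i.e. $P(\mathbf x)=\mathbf x^\top Q\mathbf x+2\mathbf a^\top\mathbf x+b\ge0$ for all $\mathbf x\in\mathbb{R}^n$, with $Q$ real symmetric, $\mathbf a\in\mathbb{R}^n$, $b\in\mathbb{R}$. Let $X_1,\dots,X_n$ be independent real Gaussian random variables (each normal with positive variance) and $\mathbf X=(X_1,\dots,X_n)^\top$. Then $$\mathbb{E}\log P(\mathbf X)\le\log\mathbb{E}P(\mathbf X)\le\mathbb{E}\log P(\mathbf X)+C_1,$$ where $C_1=-\frac{1}{\sqrt{2\pi}}\int_{\mathbb{R}}\log(x^2)e^{-x^2/2}\,dx=1.270362845\ldots$. *)

theory Defs
  imports "HOL-Probability.Probability"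
begin

definition quad_poly :: "real^'n^'n \<Rightarrow> real^'n \<Rightarrow> real \<Rightarrow> real^'n \<Rightarrow> real" where
  "quad_poly Q a b x = x \<bullet> (Q *v x) + 2 * (a \<bullet> x) + b"

definition C1 :: real where
  "C1 = - (1 / sqrt (2 * pi)) * (LBINT x. ln (x\<^sup>2) * exp (- (x\<^sup>2) / 2))"

end

theory Submission
  imports Defs "HOL-Real_Asymp.Real_Asymp"
begin

text \<open>
  A nonnegative quadratic polynomial is a sum of squares of affine forms (complete the square one
  variable at a time), and an affine form of independent Gaussians is Gaussian or a nonzero
  constant. The first inequality is Jensen's. For the second, the bound
  \<open>ln (E T) \<le> E (ln T) + C\<close> passes from the summands to the sum by concavity of \<open>ln\<close>, so it
  suffices to treat \<open>U\<^sup>2\<close> with \<open>U\<close> normal with mean \<open>m\<close> and deviation \<open>s\<close>.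
  By Frullani's integral, \<open>E (ln Y)\<close> is the integral over \<open>t > 0\<close> of
  \<open>(exp (-t) - E (exp (-t Y))) / t\<close>, so \<open>E (ln Y)\<close> is monotone in the Laplace transform of \<open>Y\<close>.
  The Laplace transform of \<open>U\<^sup>2\<close> is dominated by that of \<open>V\<^sup>2\<close>, where \<open>V\<close> is centred normal
  with \<open>E (V\<^sup>2) = m\<^sup>2 + s\<^sup>2 = E (U\<^sup>2)\<close>, and by scaling \<open>E (ln (V\<^sup>2)) = ln (m\<^sup>2 + s\<^sup>2) - C1\<close>.
\<close>

section \<open>Logarithmic moments via Frullani's integral\<close>

lemma nn_integral_exp_neg_mult:
  fixes u :: real
  assumes u: "0 < u"
  shows "(\<integral>\<^sup>+t\<in>{0<..}. ennreal (exp (-(t*u))) \<partial>lborel) = ennreal (1/u)"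
proof -
  have "(\<integral>\<^sup>+t. ennreal (exp (-(t*u))) * indicator {0<..} t \<partial>lborel)
      = (\<integral>\<^sup>+t. ennreal (exp (-(t*u))) * indicator {0..} t \<partial>lborel)"
    by (rule nn_integral_cong_AE)
      (use AE_lborel_singleton[of 0] in \<open>auto split: split_indicator\<close>)
  also have "\<dots> = ennreal (0 - (- exp (-(0*u)) / u))"
  proof (rule nn_integral_FTC_atLeast)
    fix x :: real
    show "((\<lambda>t. - exp (-(t*u)) / u) has_real_derivative exp (-(x*u))) (at x)"
      using u by (auto intro!: derivative_eq_intros)
    show "((\<lambda>t. - exp (-(t*u)) / u) \<longlongrightarrow> 0) at_top"
      using u by real_asymp
  qed auto
  finally show ?thesis by simp
qed

lemma nn_integral_frullani_exp:
  fixes A B :: real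
  assumes A: "0 < A" and AB: "A \<le> B"
  shows "(\<integral>\<^sup>+t\<in>{0<..}. ennreal ((exp (-(t*A)) - exp (-(t*B))) / t) \<partial>lborel) = ennreal (ln B - ln A)"
proof -
  have inner: "ennreal ((exp (-(t*A)) - exp (-(t*B))) / t)
      = (\<integral>\<^sup>+u. ennreal (exp (-(t*u))) * indicator {A..B} u \<partial>lborel)" if "0 < t" for t
  proof -
    have "(\<integral>\<^sup>+u. ennreal (exp (-(t*u))) * indicator {A..B} u \<partial>lborel)
       = ennreal ((- exp (-(t*B)) / t) - (- exp (-(t*A)) / t))"
      by (rule nn_integral_FTC_Icc)
        (use AB \<open>0 < t\<close> in \<open>auto intro!: derivative_eq_intros\<close>)
    then show ?thesis by (simp add: diff_divide_distrib)
  qed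
  have "(\<integral>\<^sup>+t. ennreal ((exp (-(t*A)) - exp (-(t*B))) / t) * indicator {0<..} t \<partial>lborel)
     = (\<integral>\<^sup>+t. (\<integral>\<^sup>+u. ennreal (exp (-(t*u))) * indicator {A..B} u * indicator {0<..} t \<partial>lborel) \<partial>lborel)"
    by (rule nn_integral_cong) (auto simp: inner nn_integral_multc split: split_indicator)
  also have "\<dots> = (\<integral>\<^sup>+u. (\<integral>\<^sup>+t. ennreal (exp (-(t*u))) * indicator {A..B} u * indicator {0<..} t \<partial>lborel) \<partial>lborel)"
    by (rule lborel_pair.Fubini') measurable
  also have "\<dots> = (\<integral>\<^sup>+u. ennreal (1/u) * indicator {A..B} u \<partial>lborel)"
  proof (rule nn_integral_cong)
    fix u :: real
    show "(\<integral>\<^sup>+t. ennreal (exp (-(t*u))) * indicator {A..B} u * indicator {0<..} t \<partial>lborel)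
       = ennreal (1/u) * indicator {A..B} u"
      using nn_integral_exp_neg_mult[of u] A
      by (cases "u \<in> {A..B}") (auto simp: nn_integral_multc mult.commute mult.left_commute)
  qed
  also have "\<dots> = ennreal (ln B - ln A)"
    by (rule nn_integral_FTC_Icc)
      (use A AB in \<open>auto intro!: derivative_eq_intros simp: field_simps\<close>)
  finally show ?thesis .
qed

lemma frullani_exp:
  fixes A B :: real
  assumes "0 < A" "0 < B"
  shows "has_bochner_integral lborel
      (\<lambda>t. indicator {0<..} t * ((exp (-(t*A)) - exp (-(t*B))) / t)) (ln B - ln A)"
    and "(\<integral>\<^sup>+t. norm (indicator {0<..} t * ((exp (-(t*A)) - exp (-(t*B))) / t)) \<partial>lborel)
      = ennreal \<bar>ln B - ln A\<bar>"
proof -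
  define F where "F A B = (\<lambda>t::real. indicator {0<..} t * ((exp (-(t*A)) - exp (-(t*B))) / t))" for A B :: real
  have ordered: "has_bochner_integral lborel (F A B) (ln B - ln A)
      \<and> (\<integral>\<^sup>+t. norm (F A B t) \<partial>lborel) = ennreal (ln B - ln A)" if "0 < A" "A \<le> B" for A B :: real
  proof -
    have nonneg: "0 \<le> F A B t" for t
      using that by (auto simp: F_def indicator_def intro!: divide_nonneg_pos mult_right_mono)
    have nn: "(\<integral>\<^sup>+t. F A B t \<partial>lborel) = ennreal (ln B - ln A)"
      using nn_integral_frullani_exp[OF that] by (simp add: F_def indicator_mult_ennreal mult.commute)
    have "F A B \<in> borel_measurable lborel"
      unfolding F_def by measurable
    then have "has_bochner_integral lborel (F A B) (ln B - ln A)"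
      by (rule has_bochner_integral_nn_integral[OF _ _ _ nn]) (use nonneg that in auto)
    moreover have "norm (F A B t) = F A B t" for t
      using nonneg by simp
    ultimately show ?thesis
      using nn by presburger
  qed
  have swap: "F B A = (\<lambda>t. - F A B t)"
    by (simp add: F_def fun_eq_iff diff_divide_distrib right_diff_distrib)
  have "has_bochner_integral lborel (F A B) (ln B - ln A)
      \<and> (\<integral>\<^sup>+t. norm (F A B t) \<partial>lborel) = ennreal \<bar>ln B - ln A\<bar>"
  proof (cases "A \<le> B")
    case False
    with ordered[of B A] assms show ?thesis
      by (auto simp: swap dest: has_bochner_integral_minus)
  qed (use ordered assms in auto)
  then show "has_bochner_integral lborel
      (\<lambda>t. indicator {0<..} t * ((exp (-(t*A)) - exp (-(t*B))) / t)) (ln B - ln A)"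
    and "(\<integral>\<^sup>+t. norm (indicator {0<..} t * ((exp (-(t*A)) - exp (-(t*B))) / t)) \<partial>lborel)
      = ennreal \<bar>ln B - ln A\<bar>"
    unfolding F_def by simp_all
qed

text \<open>
  By Frullani, \<open>ln y\<close> is the integral of \<open>(exp (-t) - exp (-t y)) / t\<close> over \<open>t > 0\<close>.
  The integrand has constant sign in \<open>t\<close>, so its absolute integral is \<open>\<bar>ln y\<bar>\<close>;
  hence it is integrable on \<open>M \<Otimes> lborel\<close> and Fubini applies.
\<close>

lemma (in prob_space) expectation_ln_eq_laplace:
  fixes Y :: "'a \<Rightarrow> real"
  assumes Y[measurable]: "Y \<in> borel_measurable M"
    and pos: "AE \<omega> in M. 0 < Y \<omega>"
    and int: "integrable M (\<lambda>\<omega>. ln (Y \<omega>))"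
  shows "has_bochner_integral lborel
      (\<lambda>t. indicator {0<..} t * ((exp (-t) - expectation (\<lambda>\<omega>. exp (-(t * Y \<omega>)))) / t))
      (expectation (\<lambda>\<omega>. ln (Y \<omega>)))"
proof -
  interpret pair_sigma_finite M lborel ..
  define F where "F \<omega> t = indicator {0<..} t * ((exp (-t) - exp (-(t * Y \<omega>))) / t)" for \<omega> and t :: real
  have F_fibre: "AE \<omega> in M. has_bochner_integral lborel (F \<omega>) (ln (Y \<omega>))
      \<and> (\<integral>\<^sup>+t. norm (F \<omega> t) \<partial>lborel) = ennreal \<bar>ln (Y \<omega>)\<bar>"
    using pos by eventually_elim (use frullani_exp[of 1] in \<open>simp add: F_def[abs_def]\<close>)
  have F_int: "integrable (M \<Otimes>\<^sub>M lborel) (case_prod F)"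
  proof (subst integrable_iff_bounded, intro conjI)
    show meas: "case_prod F \<in> borel_measurable (M \<Otimes>\<^sub>M lborel)"
      unfolding F_def by measurable
    have "(\<integral>\<^sup>+p. norm (case_prod F p) \<partial>(M \<Otimes>\<^sub>M lborel)) = (\<integral>\<^sup>+\<omega>. \<integral>\<^sup>+t. norm (F \<omega> t) \<partial>lborel \<partial>M)"
      using lborel.nn_integral_fst[of "\<lambda>p. ennreal (norm (case_prod F p))"] meas by simp
    also have "\<dots> = (\<integral>\<^sup>+\<omega>. norm (ln (Y \<omega>)) \<partial>M)"
      by (rule nn_integral_cong_AE) (use F_fibre in \<open>eventually_elim, simp\<close>)
    also have "\<dots> < \<infinity>"
      using int by (simp add: integrable_iff_bounded)
    finally show "(\<integral>\<^sup>+p. norm (case_prod F p) \<partial>(M \<Otimes>\<^sub>M lborel)) < \<infinity>" .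
  qed
  have laplace: "(\<integral>\<omega>. F \<omega> t \<partial>M)
      = indicator {0<..} t * ((exp (-t) - expectation (\<lambda>\<omega>. exp (-(t * Y \<omega>)))) / t)" for t :: real
  proof (cases "0 < t")
    case True
    have "AE \<omega> in M. norm (exp (-(t * Y \<omega>))) \<le> 1"
      using pos by eventually_elim (use True in simp)
    then have "integrable M (\<lambda>\<omega>. exp (-(t * Y \<omega>)))"
      by (rule integrable_const_bound) measurable
    then show ?thesis
      unfolding F_def using True by (simp add: prob_space)
  qed (simp add: F_def)
  have "AE \<omega> in M. ln (Y \<omega>) = (\<integral>t. F \<omega> t \<partial>lborel)"
    using F_fibre by eventually_elim (metis has_bochner_integral_integral_eq)
  then have "expectation (\<lambda>\<omega>. ln (Y \<omega>)) = (\<integral>\<omega>. \<integral>t. F \<omega> t \<partial>lborel \<partial>M)"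
    using integrable_fst[OF F_int] int by (intro integral_cong_AE) auto
  also have "\<dots> = (\<integral>t. \<integral>\<omega>. F \<omega> t \<partial>M \<partial>lborel)"
    by (rule Fubini_integral[OF F_int, symmetric])
  finally show ?thesis
    using integrable_snd[OF F_int] by (simp add: has_bochner_integral_iff laplace)
qed

lemma (in prob_space) expectation_ln_mono_laplace:
  fixes Y Z :: "'a \<Rightarrow> real"
  assumes [measurable]: "Y \<in> borel_measurable M" "Z \<in> borel_measurable M"
    and "AE \<omega> in M. 0 < Y \<omega>" "AE \<omega> in M. 0 < Z \<omega>"
    and "integrable M (\<lambda>\<omega>. ln (Y \<omega>))" "integrable M (\<lambda>\<omega>. ln (Z \<omega>))"
    and laplace_le: "\<And>t. 0 < t \<Longrightarrow>
      expectation (\<lambda>\<omega>. exp (-(t * Z \<omega>))) \<le> expectation (\<lambda>\<omega>. exp (-(t * Y \<omega>)))"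
  shows "expectation (\<lambda>\<omega>. ln (Y \<omega>)) \<le> expectation (\<lambda>\<omega>. ln (Z \<omega>))"
proof -
  let ?f = "\<lambda>W t. indicator {0<..} t * ((exp (-t) - expectation (\<lambda>\<omega>. exp (-(t * W \<omega>)))) / t)"
  have Y: "has_bochner_integral lborel (?f Y) (expectation (\<lambda>\<omega>. ln (Y \<omega>)))"
    and Z: "has_bochner_integral lborel (?f Z) (expectation (\<lambda>\<omega>. ln (Z \<omega>)))"
    by (rule expectation_ln_eq_laplace; fact)+
  have "?f Y t \<le> ?f Z t" for t
    using laplace_le[of t] by (auto simp: indicator_def divide_right_mono)
  then have "integral\<^sup>L lborel (?f Y) \<le> integral\<^sup>L lborel (?f Z)"
    using Y Z by (intro integral_mono) (auto simp: has_bochner_integral_iff)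
  then show ?thesis
    using Y Z by (simp add: has_bochner_integral_integral_eq)
qed

section \<open>Gaussian computations\<close>

lemma normal_density_mult_exp_sq:
  fixes m s t x :: real
  assumes s: "0 < s" and t: "0 \<le> t"
  defines "d \<equiv> 1 + 2 * t * s\<^sup>2"
  shows "normal_density m s x * exp (-(t * x\<^sup>2))
    = exp (-(t * m\<^sup>2 / d)) / sqrt d * normal_density (m / d) (s / sqrt d) x"
proof -
  have d: "0 < d"
    unfolding d_def using t by (simp add: add_pos_nonneg)
  have num: "(d * x - m)\<^sup>2 + 2 * s\<^sup>2 * t * m\<^sup>2 = d * ((x - m)\<^sup>2 + 2 * s\<^sup>2 * t * x\<^sup>2)"
    unfolding d_def by algebra
  have "-((x - m)\<^sup>2 / (2 * s\<^sup>2)) - t * x\<^sup>2 = -((x - m)\<^sup>2 + 2 * s\<^sup>2 * t * x\<^sup>2) / (2 * s\<^sup>2)"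
    using s by (simp add: field_simps)
  also have "\<dots> = -((d * x - m)\<^sup>2 + 2 * s\<^sup>2 * t * m\<^sup>2) / (2 * s\<^sup>2 * d)"
    unfolding num using s d by (simp add: field_simps)
  also have "\<dots> = -(t * m\<^sup>2 / d) - (x - m / d)\<^sup>2 * d / (2 * s\<^sup>2)"
    using s d by (simp add: field_simps power2_eq_square)
  finally have exponent: "-((x - m)\<^sup>2 / (2 * s\<^sup>2)) - t * x\<^sup>2 = -(t * m\<^sup>2 / d) - (x - m / d)\<^sup>2 * d / (2 * s\<^sup>2)" .
  have "sqrt (2 * pi * (s\<^sup>2 / d)) = sqrt (2 * pi * s\<^sup>2) / sqrt d"
    using d by (simp add: real_sqrt_divide)
  then show ?thesis
    unfolding normal_density_def using d
    by (simp add: power_divide exp_add[symmetric] exp_diff[symmetric] exponent)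
qed

lemma normal_laplace_sq:
  fixes m s t :: real
  assumes "0 < s" "0 \<le> t"
  shows "has_bochner_integral lborel (\<lambda>x. normal_density m s x * exp (-(t * x\<^sup>2)))
    (exp (-(t * m\<^sup>2 / (1 + 2 * t * s\<^sup>2))) / sqrt (1 + 2 * t * s\<^sup>2))"
proof -
  let ?d = "1 + 2 * t * s\<^sup>2"
  have "0 < s / sqrt ?d"
    using assms by (simp add: add_pos_nonneg)
  then have density: "has_bochner_integral lborel (normal_density (m / ?d) (s / sqrt ?d)) 1"
    by (simp add: has_bochner_integral_iff)
  have "has_bochner_integral lborel
      (\<lambda>x. exp (-(t * m\<^sup>2 / ?d)) / sqrt ?d * normal_density (m / ?d) (s / sqrt ?d) x)
      (exp (-(t * m\<^sup>2 / ?d)) / sqrt ?d * 1)"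
    by (intro has_bochner_integral_mult_right density)
  then show ?thesis
    using assms by (simp add: normal_density_mult_exp_sq)
qed

lemma normal_laplace_sq_le_centred:
  fixes m s t :: real
  assumes t: "0 \<le> t"
  shows "exp (-(t * m\<^sup>2 / (1 + 2 * t * s\<^sup>2))) / sqrt (1 + 2 * t * s\<^sup>2)
    \<le> 1 / sqrt (1 + 2 * t * (m\<^sup>2 + s\<^sup>2))"
proof -
  define y where "y = t * m\<^sup>2 / (1 + 2 * t * s\<^sup>2)"
  have d: "0 < 1 + 2 * t * s\<^sup>2"
    using t by (simp add: add_pos_nonneg)
  have y: "0 \<le> y"
    unfolding y_def using t d by simp
  have factor: "1 + 2 * t * (m\<^sup>2 + s\<^sup>2) = (1 + 2 * t * s\<^sup>2) * (1 + 2 * y)"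
    unfolding y_def using d by (simp add: field_simps)
  have "1 + 2 * y \<le> (exp y)\<^sup>2"
    using exp_ge_add_one_self[of "2 * y"] by (simp add: power2_eq_square exp_add[symmetric])
  then have "sqrt (1 + 2 * y) \<le> exp y"
    using real_le_lsqrt y by (simp add: real_sqrt_le_iff)
  then have "exp (-y) \<le> 1 / sqrt (1 + 2 * y)"
    using y by (simp add: exp_minus field_simps)
  then have "exp (-y) / sqrt (1 + 2 * t * s\<^sup>2) \<le> 1 / sqrt (1 + 2 * y) / sqrt (1 + 2 * t * s\<^sup>2)"
    using d by (intro divide_right_mono) auto
  then show ?thesis
    unfolding factor y_def[symmetric] by (simp add: real_sqrt_mult mult.commute)
qed

lemma normal_second_moment:
  fixes m s :: real
  assumes "0 < s"
  shows "has_bochner_integral lborel (\<lambda>x. normal_density m s x * x\<^sup>2) (m\<^sup>2 + s\<^sup>2)"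
proof -
  have "has_bochner_integral lborel
      (\<lambda>x. normal_density m s x * (x - m) ^ (2 * 1) + 2 * m * (normal_density m s x * x) - m\<^sup>2 * normal_density m s x)
      (fact (2 * 1) / ((2 / s\<^sup>2) ^ 1 * fact 1) + 2 * m * m - m\<^sup>2 * 1)"
    using assms
    by (intro has_bochner_integral_diff has_bochner_integral_add has_bochner_integral_mult_right
        normal_moment_even normal_moment_nz_1) (simp_all add: has_bochner_integral_iff)
  then show ?thesis
    using assms by (simp add: power2_eq_square algebra_simps)
qed

lemma abs_ln_power2_le:
  fixes u :: real
  shows "\<bar>ln (u\<^sup>2)\<bar> \<le> u\<^sup>2 + 4 * \<bar>u\<bar> powr (-1/2)"
proof (cases "u = 0")
  case False
  then have u: "0 < \<bar>u\<bar>"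
    by simp
  have "0 \<le> u\<^sup>2" "0 \<le> \<bar>u\<bar> powr (-1/2)"
    by simp_all
  have ln_sq: "ln (u\<^sup>2) = 2 * ln \<bar>u\<bar>"
    using u ln_realpow[of "\<bar>u\<bar>" 2] by simp
  show ?thesis
  proof (cases "1 \<le> \<bar>u\<bar>")
    case True
    then have "0 \<le> ln \<bar>u\<bar>"
      by simp
    moreover have "ln (u\<^sup>2) \<le> u\<^sup>2 - 1"
      using u by (intro ln_le_minus_one) simp
    ultimately show ?thesis
      using ln_sq \<open>0 \<le> \<bar>u\<bar> powr (-1/2)\<close> by linarith
  next
    case False
    then have "ln \<bar>u\<bar> \<le> 0"
      using u by simp
    moreover have "-(1/2) * ln \<bar>u\<bar> \<le> \<bar>u\<bar> powr (-1/2) - 1"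
      using u ln_le_minus_one[of "\<bar>u\<bar> powr (-1/2)"] by simp
    ultimately show ?thesis
      using ln_sq \<open>0 \<le> u\<^sup>2\<close> by linarith
  qed
qed simp

lemma integrable_abs_powr_neg_half:
  "integrable lborel (\<lambda>u::real. indicator {-1..1} u * \<bar>u\<bar> powr (-1/2))"
proof -
  let ?k = "\<lambda>u::real. indicator {0..1} u * u powr (-1/2)"
  have "(\<lambda>u::real. u powr (-1/2)) absolutely_integrable_on {0..1}"
    by (intro nonnegative_absolutely_integrable_1 integrable_on_powr_from_0) auto
  then have "integrable lebesgue ?k"
    by (simp add: set_integrable_def)
  then have k: "integrable lborel ?k"
    by (subst integrable_completion[symmetric]) measurable
  have "integrable lborel (\<lambda>u. ?k u + ?k (0 + (-1) * u))"
    using k lborel_integrable_real_affine[OF k, of "-1" 0] by simp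
  also have "(\<lambda>u. ?k u + ?k (0 + (-1) * u)) = (\<lambda>u. indicator {-1..1} u * \<bar>u\<bar> powr (-1/2))"
    by (auto simp: indicator_def fun_eq_iff)
  finally show ?thesis .
qed

lemma normal_density_le:
  fixes m s x :: real
  shows "normal_density m s x \<le> 1 / sqrt (2 * pi * s\<^sup>2)"
  unfolding normal_density_def by (simp add: divide_right_mono)

lemma integrable_normal_density_ln_sq:
  fixes m s :: real
  assumes s: "0 < s"
  shows "integrable lborel (\<lambda>x. normal_density m s x * ln (x\<^sup>2))"
proof (rule Bochner_Integration.integrable_bound)
  let ?g = "normal_density m s" and ?K = "1 / sqrt (2 * pi * s\<^sup>2)"
  let ?h = "\<lambda>x. indicator {-1..1} x * \<bar>x\<bar> powr (-1/2)"
  show "integrable lborel (\<lambda>x. ?g x * x\<^sup>2 + 4 * (?K * ?h x + ?g x))"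
    using normal_second_moment[OF s, of m] integrable_abs_powr_neg_half s
    by (intro Bochner_Integration.integrable_add Bochner_Integration.integrable_mult_right
        integrable_normal_density) (auto simp: has_bochner_integral_iff)
  show "AE x in lborel. norm (?g x * ln (x\<^sup>2)) \<le> norm (?g x * x\<^sup>2 + 4 * (?K * ?h x + ?g x))"
  proof (rule AE_I2)
    fix x :: real
    have g: "0 \<le> ?g x"
      by simp
    have "?g x * \<bar>x\<bar> powr (-1/2) \<le> ?K * ?h x + ?g x"
    proof (cases "\<bar>x\<bar> \<le> 1")
      case True
      have "?g x * \<bar>x\<bar> powr (-1/2) \<le> ?K * \<bar>x\<bar> powr (-1/2)"
        using normal_density_le[of m s x] by (rule mult_right_mono) simp
      moreover have "?K * ?h x = ?K * \<bar>x\<bar> powr (-1/2)"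
        using True by (simp add: indicator_def abs_le_iff)
      ultimately show ?thesis
        using g by linarith
    next
      case False
      then have "\<bar>x\<bar> powr (-1/2) \<le> 1"
        by (simp add: powr_minus_divide ge_one_powr_ge_zero)
      then show ?thesis
        using False g by (auto simp: indicator_def intro: mult_left_le)
    qed
    then have "?g x * \<bar>ln (x\<^sup>2)\<bar> \<le> ?g x * x\<^sup>2 + 4 * (?K * ?h x + ?g x)"
      using mult_left_mono[OF abs_ln_power2_le g, of x] by (simp add: algebra_simps)
    then show "norm (?g x * ln (x\<^sup>2)) \<le> norm (?g x * x\<^sup>2 + 4 * (?K * ?h x + ?g x))"
      using g by (simp add: abs_mult)
  qed
qed measurable

lemma C1_eq: "C1 = - (\<integral>x. std_normal_density x * ln (x\<^sup>2) \<partial>lborel)"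
  unfolding C1_def std_normal_density_def
  by (simp add: mult_ac)

lemma C1_nonneg: "0 \<le> C1"
proof -
  have "(\<integral>x. std_normal_density x * ln (x\<^sup>2) \<partial>lborel) \<le> (\<integral>x. std_normal_density x * (x\<^sup>2 - 1) \<partial>lborel)"
  proof (rule integral_mono_AE)
    show "integrable lborel (\<lambda>x. std_normal_density x * ln (x\<^sup>2))"
      using integrable_normal_density_ln_sq[of 1 0] by simp
    show "integrable lborel (\<lambda>x. std_normal_density x * (x\<^sup>2 - 1))"
      using integrable_std_normal_moment[of 2] by (simp add: right_diff_distrib)
    show "AE x in lborel. std_normal_density x * ln (x\<^sup>2) \<le> std_normal_density x * (x\<^sup>2 - 1)"
      using AE_lborel_singleton[of 0] by eventually_elim (auto intro!: mult_left_mono ln_le_minus_one)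
  qed
  also have "\<dots> = 0"
    using normal_second_moment[of 1 0]
    by (simp add: right_diff_distrib has_bochner_integral_iff)
  finally show ?thesis
    unfolding C1_eq by simp
qed

lemma (in prob_space) AE_distributed_lborel_neq:
  fixes U :: "'a \<Rightarrow> real"
  assumes U: "distributed M lborel U f"
  shows "AE \<omega> in M. U \<omega> \<noteq> c"
proof -
  have "AE x in density lborel f. x \<noteq> c"
    using AE_lborel_singleton[of c]
    by (subst AE_density[OF distributed_borel_measurable[OF U]]) (auto elim: AE_mp)
  then have "AE x in distr M lborel U. x \<noteq> c"
    unfolding distributed_distr_eq_density[OF U] .
  then show ?thesis
    by (rule AE_distrD[OF distributed_measurable[OF U]])
qed

context prob_space
begin

context
  fixes U :: "'a \<Rightarrow> real" and m s :: real
  assumes s: "0 < s" and U: "distributed M lborel U (normal_density m s)"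
begin

lemma normal_distributed_sq:
  shows "integrable M (\<lambda>\<omega>. (U \<omega>)\<^sup>2)" and "expectation (\<lambda>\<omega>. (U \<omega>)\<^sup>2) = m\<^sup>2 + s\<^sup>2"
  using normal_second_moment[OF s, of m]
  by (auto simp: has_bochner_integral_iff distributed_integrable[OF U]
      distributed_integral[OF U, of "\<lambda>x. x\<^sup>2", symmetric])

lemma integrable_ln_sq_normal: "integrable M (\<lambda>\<omega>. ln ((U \<omega>)\<^sup>2))"
  using integrable_normal_density_ln_sq[OF s, of m] by (simp add: distributed_integrable[OF U])

lemma expectation_exp_neg_sq_normal:
  assumes "0 \<le> t"
  shows "expectation (\<lambda>\<omega>. exp (-(t * (U \<omega>)\<^sup>2)))
    = exp (-(t * m\<^sup>2 / (1 + 2 * t * s\<^sup>2))) / sqrt (1 + 2 * t * s\<^sup>2)"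
  using normal_laplace_sq[OF s assms, of m]
  by (simp add: has_bochner_integral_iff distributed_integral[OF U, of "\<lambda>x. exp (-(t * x\<^sup>2))", symmetric])

end

lemma expectation_ln_sq_normal_ge:
  fixes U :: "'a \<Rightarrow> real"
  assumes s: "0 < s" and U: "distributed M lborel U (normal_density m s)"
  shows "ln (m\<^sup>2 + s\<^sup>2) - C1 \<le> expectation (\<lambda>\<omega>. ln ((U \<omega>)\<^sup>2))"
proof -
  define r where "r = sqrt (m\<^sup>2 + s\<^sup>2)"
  have r: "0 < r" "r\<^sup>2 = m\<^sup>2 + s\<^sup>2"
    unfolding r_def using s by (simp_all add: add_nonneg_pos)
  define Z where "Z \<omega> = (U \<omega> - m) / s" for \<omega>
  have Z: "distributed M lborel Z std_normal_density"
    unfolding Z_def using U normal_standard_normal_convert[OF s] by simp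
  define V where "V \<omega> = r * Z \<omega>" for \<omega>
  have V: "distributed M lborel V (normal_density 0 r)"
    unfolding V_def using normal_density_affine[OF Z, of r 0] r by simp
  have "AE \<omega> in M. ln ((V \<omega>)\<^sup>2) = ln (m\<^sup>2 + s\<^sup>2) + ln ((Z \<omega>)\<^sup>2)"
    using AE_distributed_lborel_neq[OF Z, of 0]
  proof eventually_elim
    case (elim \<omega>)
    have "(V \<omega>)\<^sup>2 = (m\<^sup>2 + s\<^sup>2) * (Z \<omega>)\<^sup>2"
      by (simp add: V_def power_mult_distrib r(2))
    then show ?case
      using elim s by (simp add: ln_mult add_nonneg_pos)
  qed
  then have "expectation (\<lambda>\<omega>. ln ((V \<omega>)\<^sup>2)) = ln (m\<^sup>2 + s\<^sup>2) + expectation (\<lambda>\<omega>. ln ((Z \<omega>)\<^sup>2))"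
    using integrable_ln_sq_normal[OF _ Z] integrable_ln_sq_normal[OF r(1) V]
    by (subst integral_cong_AE[where g="\<lambda>\<omega>. ln (m\<^sup>2 + s\<^sup>2) + ln ((Z \<omega>)\<^sup>2)"]) (auto simp: prob_space)
  also have "expectation (\<lambda>\<omega>. ln ((Z \<omega>)\<^sup>2)) = - C1"
    unfolding C1_eq by (subst distributed_integral[OF Z, symmetric]) simp_all
  finally have "ln (m\<^sup>2 + s\<^sup>2) - C1 = expectation (\<lambda>\<omega>. ln ((V \<omega>)\<^sup>2))"
    by simp
  also have "\<dots> \<le> expectation (\<lambda>\<omega>. ln ((U \<omega>)\<^sup>2))"
  proof (rule expectation_ln_mono_laplace)
    show "AE \<omega> in M. 0 < (V \<omega>)\<^sup>2"
      using AE_distributed_lborel_neq[OF V, of 0] by eventually_elim simp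
    show "AE \<omega> in M. 0 < (U \<omega>)\<^sup>2"
      using AE_distributed_lborel_neq[OF U, of 0] by eventually_elim simp
    fix t :: real
    assume "0 < t"
    then show "expectation (\<lambda>\<omega>. exp (-(t * (U \<omega>)\<^sup>2))) \<le> expectation (\<lambda>\<omega>. exp (-(t * (V \<omega>)\<^sup>2)))"
      using expectation_exp_neg_sq_normal[OF s U, of t] expectation_exp_neg_sq_normal[OF r(1) V, of t]
        normal_laplace_sq_le_centred[of t m s] r by simp
  qed (use integrable_ln_sq_normal[OF r(1) V] integrable_ln_sq_normal[OF s U]
      distributed_measurable[OF U] distributed_measurable[OF V] in simp_all)
  finally show ?thesis .
qed

end

section \<open>The Jensen gap of the logarithm\<close>

text \<open>Concavity of \<open>ln\<close>, with \<open>a + b\<close> written as a convex combination of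
  \<open>a (e1 + e2) / e1\<close> and \<open>b (e1 + e2) / e2\<close>.\<close>

lemma ln_add_ge_weighted:
  fixes a b e1 e2 :: real
  assumes "0 < a" "0 < b" "0 < e1" "0 < e2"
  shows "ln (e1 + e2) + e1 / (e1 + e2) * (ln a - ln e1) + e2 / (e1 + e2) * (ln b - ln e2) \<le> ln (a + b)"
proof -
  define e where "e = e1 + e2"
  define t where "t = e2 / e"
  have e: "0 < e" and t: "0 \<le> t" "t \<le> 1" "1 - t = e1 / e"
    using assms by (auto simp: e_def t_def field_simps)
  have "(1 - t) * ln (a * e / e1) + t * ln (b * e / e2) \<le> ln ((1 - t) *\<^sub>R (a * e / e1) + t *\<^sub>R (b * e / e2))"
    by (rule concave_onD[OF ln_concave t(1,2)]) (use assms e in simp_all)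
  also have "(1 - t) *\<^sub>R (a * e / e1) + t *\<^sub>R (b * e / e2) = a + b"
    using assms e unfolding t(3) by (simp add: t_def field_simps)
  also have "(1 - t) * ln (a * e / e1) + t * ln (b * e / e2)
      = ln e + (1 - t) * (ln a - ln e1) + t * (ln b - ln e2)"
    using assms e by (simp add: ln_div ln_mult algebra_simps)
  finally show ?thesis
    unfolding t(3) by (simp add: e_def t_def)
qed

context prob_space
begin

lemma expectation_pos:
  fixes T :: "'a \<Rightarrow> real"
  assumes "integrable M T" "AE \<omega> in M. 0 < T \<omega>"
  shows "0 < expectation T"
proof -
  have "0 \<le> expectation T"
    using assms(2) by (intro integral_nonneg_AE) (auto elim: eventually_mono)
  moreover have "expectation T \<noteq> 0"
  proof
    assume "expectation T = 0"
    then have "AE \<omega> in M. T \<omega> = 0"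
      using assms by (subst integral_nonneg_eq_0_iff_AE[symmetric]) (auto elim: eventually_mono)
    with assms(2) have "AE \<omega> in M. False"
      by eventually_elim simp
    then show False
      by simp
  qed
  ultimately show ?thesis
    by simp
qed

lemma expectation_ln_le_ln_expectation:
  fixes T :: "'a \<Rightarrow> real"
  assumes "integrable M T" "integrable M (\<lambda>\<omega>. ln (T \<omega>))" "AE \<omega> in M. 0 < T \<omega>"
  shows "expectation (\<lambda>\<omega>. ln (T \<omega>)) \<le> ln (expectation T)"
proof -
  have "- ln (expectation T) \<le> expectation (\<lambda>\<omega>. - ln (T \<omega>))"
    using ln_concave assms
    by (intro jensens_inequality[where I="{0<..}"]) (auto simp: concave_on_def)
  then show ?thesis
    by simp
qed

lemma integrable_ln_add:
  fixes T1 T2 :: "'a \<Rightarrow> real"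
  assumes "integrable M T1" "integrable M T2" "integrable M (\<lambda>\<omega>. ln (T1 \<omega>))"
    and "AE \<omega> in M. 0 < T1 \<omega>" "AE \<omega> in M. 0 < T2 \<omega>"
  shows "integrable M (\<lambda>\<omega>. ln (T1 \<omega> + T2 \<omega>))"
proof (rule Bochner_Integration.integrable_bound)
  show "integrable M (\<lambda>\<omega>. \<bar>ln (T1 \<omega>)\<bar> + \<bar>T1 \<omega> + T2 \<omega>\<bar> + 1)"
    using assms(1-3) by simp
  show "AE \<omega> in M. norm (ln (T1 \<omega> + T2 \<omega>)) \<le> norm (\<bar>ln (T1 \<omega>)\<bar> + \<bar>T1 \<omega> + T2 \<omega>\<bar> + 1)"
    using assms(4,5)
  proof eventually_elim
    case (elim \<omega>)
    then have "ln (T1 \<omega>) \<le> ln (T1 \<omega> + T2 \<omega>)" "ln (T1 \<omega> + T2 \<omega>) \<le> T1 \<omega> + T2 \<omega> - 1"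
      by (simp_all add: ln_le_minus_one)
    then show ?case
      by simp
  qed
qed (use assms(1,2) in measurable)

definition jensen_gap_ln_le :: "real \<Rightarrow> ('a \<Rightarrow> real) \<Rightarrow> bool" where
  "jensen_gap_ln_le C T \<longleftrightarrow> integrable M T \<and> integrable M (\<lambda>\<omega>. ln (T \<omega>))
    \<and> (AE \<omega> in M. 0 < T \<omega>) \<and> ln (expectation T) \<le> expectation (\<lambda>\<omega>. ln (T \<omega>)) + C"

lemma jensen_gap_ln_le_const:
  assumes "0 < c" "0 \<le> C"
  shows "jensen_gap_ln_le C (\<lambda>_. c)"
  using assms by (simp add: jensen_gap_ln_le_def prob_space)

lemma jensen_gap_ln_le_add:
  fixes T1 T2 :: "'a \<Rightarrow> real"
  assumes "jensen_gap_ln_le C T1" and "jensen_gap_ln_le C T2"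
  shows "jensen_gap_ln_le C (\<lambda>\<omega>. T1 \<omega> + T2 \<omega>)"
proof -
  from assms have int: "integrable M T1" "integrable M T2"
    and int_ln: "integrable M (\<lambda>\<omega>. ln (T1 \<omega>))" "integrable M (\<lambda>\<omega>. ln (T2 \<omega>))"
    and pos: "AE \<omega> in M. 0 < T1 \<omega>" "AE \<omega> in M. 0 < T2 \<omega>"
    and gap: "ln (expectation T1) \<le> expectation (\<lambda>\<omega>. ln (T1 \<omega>)) + C"
      "ln (expectation T2) \<le> expectation (\<lambda>\<omega>. ln (T2 \<omega>)) + C"
    unfolding jensen_gap_ln_le_def by auto
  define e1 e2 where "e1 = expectation T1" and "e2 = expectation T2"
  have e: "0 < e1" "0 < e2"
    unfolding e1_def e2_def using int pos by (auto intro: expectation_pos)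
  have sum: "expectation (\<lambda>\<omega>. T1 \<omega> + T2 \<omega>) = e1 + e2"
    unfolding e1_def e2_def using int by simp
  define lower where "lower \<omega> = ln (e1 + e2) + e1 / (e1 + e2) * (ln (T1 \<omega>) - ln e1)
      + e2 / (e1 + e2) * (ln (T2 \<omega>) - ln e2)" for \<omega>
  have lower: "AE \<omega> in M. lower \<omega> \<le> ln (T1 \<omega> + T2 \<omega>)"
    using pos by eventually_elim (use ln_add_ge_weighted e in \<open>simp add: lower_def\<close>)
  have int_lower: "integrable M lower"
    unfolding lower_def using int_ln by simp
  have int_ln_sum: "integrable M (\<lambda>\<omega>. ln (T1 \<omega> + T2 \<omega>))"
    using int int_ln(1) pos by (rule integrable_ln_add)
  have "e1 / (e1 + e2) + e2 / (e1 + e2) = 1"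
    using e by (simp flip: add_divide_distrib)
  then have "ln (e1 + e2) - C = ln (e1 + e2) + (e1 / (e1 + e2) + e2 / (e1 + e2)) * (-C)"
    by simp
  also have "\<dots> = ln (e1 + e2) + e1 / (e1 + e2) * (-C) + e2 / (e1 + e2) * (-C)"
    by (simp only: distrib_right add.assoc)
  also have "\<dots> \<le> ln (e1 + e2) + e1 / (e1 + e2) * (expectation (\<lambda>\<omega>. ln (T1 \<omega>)) - ln e1)
      + e2 / (e1 + e2) * (expectation (\<lambda>\<omega>. ln (T2 \<omega>)) - ln e2)"
    using gap[folded e1_def e2_def] e by (intro add_mono mult_left_mono) simp_all
  also have "\<dots> = expectation lower"
    unfolding lower_def using int_ln by (simp add: prob_space)
  also have "\<dots> \<le> expectation (\<lambda>\<omega>. ln (T1 \<omega> + T2 \<omega>))"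
    using lower by (intro integral_mono_AE int_lower int_ln_sum)
  finally show ?thesis
    unfolding jensen_gap_ln_le_def sum using int int_ln_sum pos
    by (auto elim: eventually_mono)
qed

lemma jensen_gap_ln_le_sum_list:
  fixes T :: "'i \<Rightarrow> 'a \<Rightarrow> real"
  assumes "xs \<noteq> []" "\<And>x. x \<in> set xs \<Longrightarrow> jensen_gap_ln_le C (T x)"
  shows "jensen_gap_ln_le C (\<lambda>\<omega>. \<Sum>x\<leftarrow>xs. T x \<omega>)"
  using assms
proof (induction xs)
  case (Cons x xs)
  then show ?case
    by (cases "xs = []") (auto intro: jensen_gap_ln_le_add)
qed simp

lemma jensen_gap_ln_le_sq_normal:
  fixes U :: "'a \<Rightarrow> real"
  assumes "0 < s" "distributed M lborel U (normal_density m s)"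
  shows "jensen_gap_ln_le C1 (\<lambda>\<omega>. (U \<omega>)\<^sup>2)"
  using normal_distributed_sq[OF assms] integrable_ln_sq_normal[OF assms]
    expectation_ln_sq_normal_ge[OF assms] AE_distributed_lborel_neq[OF assms(2), of 0]
  unfolding jensen_gap_ln_le_def by (auto elim: eventually_mono)

lemma distributed_affine_indep_normal:
  fixes X :: "'i \<Rightarrow> 'a \<Rightarrow> real"
  assumes I: "finite I" "indep_vars (\<lambda>_. borel) X I"
    and normal: "\<And>i. i \<in> I \<Longrightarrow> 0 < \<sigma> i" "\<And>i. i \<in> I \<Longrightarrow> distributed M lborel (X i) (normal_density (\<mu> i) (\<sigma> i))"
    and l: "\<exists>i\<in>I. l i \<noteq> 0"
  shows "distributed M lborel (\<lambda>\<omega>. (\<Sum>i\<in>I. l i * X i \<omega>) + c)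
    (normal_density ((\<Sum>i\<in>I. l i * \<mu> i) + c) (sqrt (\<Sum>i\<in>I. (l i * \<sigma> i)\<^sup>2)))"
proof -
  define J where "J = {i \<in> I. l i \<noteq> 0}"
  have J: "finite J" "J \<noteq> {}" "J \<subseteq> I"
    using I(1) l by (auto simp: J_def)
  have "indep_vars (\<lambda>_. borel) (\<lambda>i \<omega>. l i * X i \<omega>) J"
    using indep_vars_compose2[OF indep_vars_subset[OF I(2) J(3)], of "\<lambda>i x. l i * x"] by simp
  moreover have "distributed M lborel (\<lambda>\<omega>. l i * X i \<omega>) (normal_density (l i * \<mu> i) (\<bar>l i\<bar> * \<sigma> i))"
    if "i \<in> J" for i
    using normal_density_affine[OF normal(2), of i "l i" 0] normal(1)[of i] that by (simp add: J_def)
  ultimately have "distributed M lborel (\<lambda>\<omega>. \<Sum>i\<in>J. l i * X i \<omega>)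
      (normal_density (\<Sum>i\<in>J. l i * \<mu> i) (sqrt (\<Sum>i\<in>J. (\<bar>l i\<bar> * \<sigma> i)\<^sup>2)))"
    using J normal(1) by (intro sum_indep_normal) (auto simp: J_def)
  moreover have "0 < (\<bar>l i\<bar> * \<sigma> i)\<^sup>2" if "i \<in> J" for i
    using that normal(1)[of i] by (simp add: J_def)
  then have "0 < sqrt (\<Sum>i\<in>J. (\<bar>l i\<bar> * \<sigma> i)\<^sup>2)"
    using J by (simp add: sum_pos)
  ultimately have "distributed M lborel (\<lambda>\<omega>. c + 1 * (\<Sum>i\<in>J. l i * X i \<omega>))
      (normal_density (c + 1 * (\<Sum>i\<in>J. l i * \<mu> i)) (\<bar>1\<bar> * sqrt (\<Sum>i\<in>J. (\<bar>l i\<bar> * \<sigma> i)\<^sup>2)))"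
    by (intro normal_density_affine) auto
  moreover have "(\<Sum>i\<in>J. f i) = (\<Sum>i\<in>I. f i)" if "\<And>i. l i = 0 \<Longrightarrow> f i = 0" for f :: "'i \<Rightarrow> real"
    using I(1) that by (intro sum.mono_neutral_left) (auto simp: J_def)
  ultimately show ?thesis
    by (simp add: power_mult_distrib add.commute)
qed

lemma jensen_gap_ln_le_sq_affine_normal:
  fixes X :: "'i \<Rightarrow> 'a \<Rightarrow> real"
  assumes "finite I" "indep_vars (\<lambda>_. borel) X I"
    and "\<And>i. i \<in> I \<Longrightarrow> 0 < \<sigma> i" "\<And>i. i \<in> I \<Longrightarrow> distributed M lborel (X i) (normal_density (\<mu> i) (\<sigma> i))"
    and nontrivial: "(\<exists>i\<in>I. l i \<noteq> 0) \<or> c \<noteq> 0"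
  shows "jensen_gap_ln_le C1 (\<lambda>\<omega>. ((\<Sum>i\<in>I. l i * X i \<omega>) + c)\<^sup>2)"
proof (cases "\<exists>i\<in>I. l i \<noteq> 0")
  case True
  then obtain i where "i \<in> I" "l i \<noteq> 0"
    by blast
  then have "0 < (l i * \<sigma> i)\<^sup>2"
    using assms(3)[of i] by simp
  then have "0 < sqrt (\<Sum>i\<in>I. (l i * \<sigma> i)\<^sup>2)"
    using sum_pos2[OF assms(1) \<open>i \<in> I\<close>, of "\<lambda>i. (l i * \<sigma> i)\<^sup>2"] by simp
  with distributed_affine_indep_normal[OF assms(1-4) True] show ?thesis
    by (rule jensen_gap_ln_le_sq_normal[rotated])
next
  case False
  then show ?thesis
    using nontrivial C1_nonneg jensen_gap_ln_le_const[of "c\<^sup>2" C1] by simp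
qed

end

section \<open>Nonnegative quadratic polynomials are sums of squares\<close>

definition quad_fun :: "'i set \<Rightarrow> ('i \<Rightarrow> 'i \<Rightarrow> real) \<Rightarrow> ('i \<Rightarrow> real) \<Rightarrow> real \<Rightarrow> ('i \<Rightarrow> real) \<Rightarrow> real" where
  "quad_fun S Q a b x = (\<Sum>i\<in>S. \<Sum>j\<in>S. Q i j * x i * x j) + 2 * (\<Sum>i\<in>S. a i * x i) + b"

lemma nonneg_quadratic_leading_coeff:
  fixes \<alpha> \<beta> \<gamma> :: real
  assumes nonneg: "\<And>t. 0 \<le> \<alpha> * t\<^sup>2 + \<beta> * t + \<gamma>"
  shows "0 \<le> \<alpha>"
proof (rule ccontr)
  assume "\<not> 0 \<le> \<alpha>"
  define t where "t = (\<bar>\<beta>\<bar> + \<bar>\<gamma>\<bar> + 1) / (- \<alpha>) + 1"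
  have t: "1 \<le> t" "\<bar>\<beta>\<bar> + \<bar>\<gamma>\<bar> + 1 \<le> t * (- \<alpha>)"
    using \<open>\<not> 0 \<le> \<alpha>\<close> by (auto simp: t_def field_simps)
  have "\<beta> * t \<le> \<bar>\<beta>\<bar> * t" "\<gamma> \<le> \<bar>\<gamma>\<bar> * t"
    using t(1) by (auto intro: mult_right_mono order_trans[OF abs_ge_self] simp: mult_le_cancel_left1)
  then have "\<alpha> * t\<^sup>2 + \<beta> * t + \<gamma> \<le> t * (\<alpha> * t + \<bar>\<beta>\<bar> + \<bar>\<gamma>\<bar>)"
    by (simp add: power2_eq_square algebra_simps)
  also have "\<dots> \<le> t * (-1)"
    using t by (intro mult_left_mono) (auto simp: algebra_simps)
  finally show False
    using nonneg[of t] t(1) by simp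
qed

lemma nonneg_affine_slope_eq_0:
  fixes \<beta> \<gamma> :: real
  assumes nonneg: "\<And>t. 0 \<le> \<beta> * t + \<gamma>"
  shows "\<beta> = 0"
proof (rule ccontr)
  assume "\<beta> \<noteq> 0"
  then have "\<beta> * (- (\<bar>\<gamma>\<bar> + 1) / \<beta>) + \<gamma> < 0"
    by simp
  then show False
    using nonneg by (meson not_le)
qed

lemma quad_fun_upd:
  assumes "k \<notin> S"
  shows "quad_fun S Q a b (x(k := t)) = quad_fun S Q a b x"
  unfolding quad_fun_def using assms
  by (intro arg_cong2[where f="(+)"] arg_cong2[where f="(*)"] sum.cong refl) auto

lemma quad_fun_insert:
  assumes "finite S" "k \<notin> S" and symQ: "\<And>i j. Q i j = Q j i"
  shows "quad_fun (insert k S) Q a b x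
    = Q k k * (x k)\<^sup>2 + 2 * x k * ((\<Sum>j\<in>S. Q k j * x j) + a k) + quad_fun S Q a b x"
proof -
  have "(\<Sum>i\<in>insert k S. \<Sum>j\<in>insert k S. Q i j * x i * x j)
      = Q k k * x k * x k + (\<Sum>j\<in>S. Q k j * x k * x j) + (\<Sum>i\<in>S. Q i k * x i * x k)
        + (\<Sum>i\<in>S. \<Sum>j\<in>S. Q i j * x i * x j)"
    using assms by (simp add: sum.distrib)
  also have "(\<Sum>i\<in>S. Q i k * x i * x k) = (\<Sum>j\<in>S. Q k j * x k * x j)"
    by (intro sum.cong refl) (simp add: symQ[of _ k])
  finally show ?thesis
    using assms by (simp add: quad_fun_def sum_distrib_left power2_eq_square algebra_simps)
qed

lemma quad_fun_schur_complement:
  fixes Q :: "'i \<Rightarrow> 'i \<Rightarrow> real"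
  assumes \<alpha>: "Q k k \<noteq> 0"
  shows "quad_fun S (\<lambda>i j. Q i j - Q k i * Q k j / Q k k) (\<lambda>j. a j - Q k j * a k / Q k k)
      (b - (a k)\<^sup>2 / Q k k) x = quad_fun S Q a b x - ((\<Sum>j\<in>S. Q k j * x j) + a k)\<^sup>2 / Q k k"
proof -
  let ?\<alpha> = "Q k k"
  define B where "B = (\<Sum>i\<in>S. \<Sum>j\<in>S. Q k i * Q k j * x i * x j)"
  define d where "d = (\<Sum>j\<in>S. Q k j * x j)"
  have square: "(d + a k)\<^sup>2 / ?\<alpha> = B / ?\<alpha> + 2 * (a k / ?\<alpha> * d) + (a k)\<^sup>2 / ?\<alpha>"
    unfolding B_def d_def
    by (simp add: power2_eq_square sum_product add_divide_distrib algebra_simps)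
  have "(\<Sum>i\<in>S. \<Sum>j\<in>S. (Q i j - Q k i * Q k j / ?\<alpha>) * x i * x j)
      = (\<Sum>i\<in>S. \<Sum>j\<in>S. Q i j * x i * x j) - B / ?\<alpha>"
    unfolding B_def by (simp add: sum_subtractf sum_divide_distrib left_diff_distrib)
  moreover have "(\<Sum>i\<in>S. (a i - Q k i * a k / ?\<alpha>) * x i)
      = (\<Sum>i\<in>S. a i * x i - a k / ?\<alpha> * (Q k i * x i))"
    by (intro sum.cong refl) (simp add: algebra_simps)
  then have "(\<Sum>i\<in>S. (a i - Q k i * a k / ?\<alpha>) * x i) = (\<Sum>i\<in>S. a i * x i) - a k / ?\<alpha> * d"
    unfolding d_def by (simp add: sum_subtractf sum_distrib_left)
  ultimately show ?thesis
    unfolding quad_fun_def d_def[symmetric] square by simp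
qed

lemma quad_fun_complete_square:
  fixes Q :: "'i \<Rightarrow> 'i \<Rightarrow> real" and a x :: "'i \<Rightarrow> real"
  assumes "finite S" "k \<notin> S" "\<And>i j. Q i j = Q j i" and \<alpha>: "0 < Q k k"
  shows "quad_fun (insert k S) Q a b x
    = ((\<Sum>i\<in>insert k S. ((\<lambda>j. Q k j / sqrt (Q k k))(k := sqrt (Q k k))) i * x i) + a k / sqrt (Q k k))\<^sup>2
    + quad_fun S (\<lambda>i j. Q i j - Q k i * Q k j / Q k k) (\<lambda>j. a j - Q k j * a k / Q k k)
        (b - (a k)\<^sup>2 / Q k k) x"
proof -
  let ?\<alpha> = "Q k k"
  define L where "L = (\<Sum>j\<in>S. Q k j * x j) + a k"
  have "quad_fun (insert k S) Q a b x = ?\<alpha> * (x k)\<^sup>2 + 2 * x k * L + quad_fun S Q a b x"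
    unfolding L_def using assms(1-3) by (rule quad_fun_insert)
  also have "?\<alpha> * (x k)\<^sup>2 + 2 * x k * L = (sqrt ?\<alpha> * x k + L / sqrt ?\<alpha>)\<^sup>2 - L\<^sup>2 / ?\<alpha>"
    using \<alpha> by (simp add: power2_eq_square field_simps)
  also have "sqrt ?\<alpha> * x k + L / sqrt ?\<alpha>
      = (\<Sum>i\<in>insert k S. ((\<lambda>j. Q k j / sqrt ?\<alpha>)(k := sqrt ?\<alpha>)) i * x i) + a k / sqrt ?\<alpha>"
    using assms(1,2) unfolding L_def
    by (simp add: sum_divide_distrib add_divide_distrib) (intro sum.cong refl, auto)
  finally show ?thesis
    using \<alpha> by (simp add: quad_fun_schur_complement L_def)
qed

lemma sum_insert_fun_upd_zero:
  fixes l x :: "'i \<Rightarrow> 'a::semiring_0"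
  assumes "finite S" "k \<notin> S"
  shows "(\<Sum>i\<in>insert k S. (l(k := 0)) i * x i) = (\<Sum>i\<in>S. l i * x i)"
proof -
  have "(\<Sum>i\<in>S. (l(k := 0)) i * x i) = (\<Sum>i\<in>S. l i * x i)"
    using assms(2) by (intro sum.cong) auto
  then show ?thesis
    using assms by simp
qed

definition sum_of_affine_squares :: "'i set \<Rightarrow> (('i \<Rightarrow> real) \<Rightarrow> real) \<Rightarrow> bool" where
  "sum_of_affine_squares S f \<longleftrightarrow> (\<exists>ls. \<forall>x. f x = (\<Sum>(l, c)\<leftarrow>ls. ((\<Sum>i\<in>S. l i * x i) + c)\<^sup>2))"

lemma sum_of_affine_squares_insert:
  assumes "finite S" "k \<notin> S" "sum_of_affine_squares S f"
  shows "sum_of_affine_squares (insert k S) f"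
proof -
  obtain ls where ls: "\<forall>x. f x = (\<Sum>(l, c)\<leftarrow>ls. ((\<Sum>i\<in>S. l i * x i) + c)\<^sup>2)"
    using assms(3) unfolding sum_of_affine_squares_def by blast
  have "(\<Sum>(l, c)\<leftarrow>map (\<lambda>(l, c). (l(k := 0), c)) ls. ((\<Sum>i\<in>insert k S. l i * x i) + c)\<^sup>2)
      = (\<Sum>(l, c)\<leftarrow>ls. ((\<Sum>i\<in>S. l i * x i) + c)\<^sup>2)" for x
    using assms(1,2) by (induction ls) (auto simp: sum_insert_fun_upd_zero simp del: fun_upd_apply sum.insert)
  then show ?thesis
    unfolding sum_of_affine_squares_def using ls by (intro exI[of _ "map (\<lambda>(l, c). (l(k := 0), c)) ls"]) simp
qed

lemma sum_of_affine_squares_add_square: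
  assumes "sum_of_affine_squares S f"
  shows "sum_of_affine_squares S (\<lambda>x. ((\<Sum>i\<in>S. l i * x i) + c)\<^sup>2 + f x)"
proof -
  obtain ls where "\<forall>x. f x = (\<Sum>(l, c)\<leftarrow>ls. ((\<Sum>i\<in>S. l i * x i) + c)\<^sup>2)"
    using assms unfolding sum_of_affine_squares_def by blast
  then show ?thesis
    unfolding sum_of_affine_squares_def by (intro exI[of _ "(l, c) # ls"]) simp
qed

lemma nonneg_quad_fun_insert_slice:
  assumes "finite S" "k \<notin> S" "\<And>i j. Q i j = Q j i" "\<And>x. 0 \<le> quad_fun (insert k S) Q a b x"
  shows "0 \<le> Q k k * t\<^sup>2 + 2 * ((\<Sum>j\<in>S. Q k j * x j) + a k) * t + quad_fun S Q a b x"
proof -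
  have "(\<Sum>j\<in>S. Q k j * (x(k := t)) j) = (\<Sum>j\<in>S. Q k j * x j)"
    using assms(2) by (intro sum.cong) auto
  then show ?thesis
    using assms(4)[of "x(k := t)"] quad_fun_insert[OF assms(1-3), where x="x(k := t)"]
    by (simp add: quad_fun_upd[OF assms(2)] mult_ac)
qed

theorem nonneg_quad_fun_sum_of_affine_squares:
  fixes S :: "'i set"
  assumes "finite S" "\<And>i j. Q i j = Q j i" "\<And>x. 0 \<le> quad_fun S Q a b x"
  shows "sum_of_affine_squares S (quad_fun S Q a b)"
  using assms
proof (induction S arbitrary: Q a b rule: finite_induct)
  case empty
  then have "\<forall>x. quad_fun {} Q a b x = (\<Sum>(l, c)\<leftarrow>[(\<lambda>_. 0, sqrt b)]. ((\<Sum>i\<in>{}. l i * x i) + c)\<^sup>2)"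
    by (simp add: quad_fun_def)
  then show ?case
    unfolding sum_of_affine_squares_def ..
next
  case (insert k S)
  define L where "L x = (\<Sum>j\<in>S. Q k j * x j) + a k" for x :: "'i \<Rightarrow> real"
  note slice = nonneg_quad_fun_insert_slice[OF insert.hyps insert.prems, folded L_def]
  consider "Q k k = 0" | "0 < Q k k"
    using nonneg_quadratic_leading_coeff[OF slice] by linarith
  then show ?case
  proof cases
    case 1
    then have "L x = 0" for x
      using nonneg_affine_slope_eq_0[of "2 * L x" "quad_fun S Q a b x"] slice by simp
    then have eq: "quad_fun (insert k S) Q a b = quad_fun S Q a b"
      using quad_fun_insert[where Q=Q, OF insert.hyps insert.prems(1)] 1 by (auto simp: L_def)
    have "0 \<le> quad_fun S Q a b x" for x
      using insert.prems(2)[of x] unfolding eq .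
    then have "sum_of_affine_squares S (quad_fun S Q a b)"
      by (rule insert.IH[where Q=Q, OF insert.prems(1)])
    then show ?thesis
      unfolding eq using insert.hyps by (intro sum_of_affine_squares_insert)
  next
    case 2
    let ?Q' = "\<lambda>i j. Q i j - Q k i * Q k j / Q k k" and ?a' = "\<lambda>j. a j - Q k j * a k / Q k k"
      and ?b' = "b - (a k)\<^sup>2 / Q k k"
    have "0 \<le> quad_fun S Q a b x - (L x)\<^sup>2 / Q k k" for x
      using slice[of "- L x / Q k k" x] 2 by (simp add: power2_eq_square field_simps)
    then have schur_nonneg: "0 \<le> quad_fun S ?Q' ?a' ?b' x" for x
      using 2 by (simp add: quad_fun_schur_complement L_def)
    have schur_sym: "?Q' i j = ?Q' j i" for i j
      using insert.prems(1) by (simp add: mult.commute)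
    have "sum_of_affine_squares S (quad_fun S ?Q' ?a' ?b')"
      by (rule insert.IH[of ?Q' ?a' ?b', OF schur_sym schur_nonneg])
    then have "sum_of_affine_squares (insert k S) (quad_fun S ?Q' ?a' ?b')"
      using insert.hyps by (intro sum_of_affine_squares_insert)
    then show ?thesis
      unfolding quad_fun_complete_square[where Q=Q, OF insert.hyps insert.prems(1) 2, abs_def]
      by (rule sum_of_affine_squares_add_square)
  qed
qed

lemma quad_poly_eq_quad_fun:
  "quad_poly Q a b x = quad_fun UNIV (\<lambda>i j. Q $ i $ j) (\<lambda>i. a $ i) b (\<lambda>i. x $ i)"
  by (simp add: quad_poly_def quad_fun_def inner_vec_def matrix_vector_mult_def
      sum_distrib_left mult_ac)

lemma quad_poly_sum_of_affine_squares:
  fixes Q :: "real^'n^'n" and a :: "real^'n"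
  assumes "transpose Q = Q" "\<And>x. 0 \<le> quad_poly Q a b x"
  shows "\<exists>ls. \<forall>x. quad_poly Q a b x = (\<Sum>(l, c)\<leftarrow>ls. ((\<Sum>i\<in>UNIV. l i * x $ i) + c)\<^sup>2)"
proof -
  have "Q $ i $ j = Q $ j $ i" for i j
    using arg_cong[OF assms(1), of "\<lambda>A. A $ j $ i"] by (simp add: transpose_def)
  moreover have "0 \<le> quad_fun UNIV (\<lambda>i j. Q $ i $ j) (\<lambda>i. a $ i) b x" for x
    using assms(2)[of "\<chi> i. x i"] by (simp add: quad_poly_eq_quad_fun)
  ultimately have "sum_of_affine_squares UNIV (quad_fun UNIV (\<lambda>i j. Q $ i $ j) (\<lambda>i. a $ i) b)"
    by (intro nonneg_quad_fun_sum_of_affine_squares) auto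
  then show ?thesis
    unfolding sum_of_affine_squares_def quad_poly_eq_quad_fun by blast
qed

theorem lemma5p2:
  fixes M :: "'s measure"
    and Q :: "real^'n^'n" and a :: "real^'n" and b :: real
    and X :: "'n \<Rightarrow> 's \<Rightarrow> real"
    and \<mu> \<sigma> :: "'n \<Rightarrow> real"
  assumes "prob_space M"
    and symQ: "transpose Q = Q"
    and nonneg: "\<And>x. quad_poly Q a b x \<ge> 0"
    and nonzero: "\<exists>x. quad_poly Q a b x \<noteq> 0"
    and indep: "prob_space.indep_vars M (\<lambda>_. borel) X UNIV"
    and sigma_pos: "\<And>i. \<sigma> i > 0"
    and gauss: "\<And>i. distributed M lborel (X i) (normal_density (\<mu> i) (\<sigma> i))"
  shows "integrable M (\<lambda>\<omega>. quad_poly Q a b (\<chi> i. X i \<omega>))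
    \<and> integrable M (\<lambda>\<omega>. ln (quad_poly Q a b (\<chi> i. X i \<omega>)))
    \<and> prob_space.expectation M (\<lambda>\<omega>. ln (quad_poly Q a b (\<chi> i. X i \<omega>)))
        \<le> ln (prob_space.expectation M (\<lambda>\<omega>. quad_poly Q a b (\<chi> i. X i \<omega>)))
    \<and> ln (prob_space.expectation M (\<lambda>\<omega>. quad_poly Q a b (\<chi> i. X i \<omega>)))
        \<le> prob_space.expectation M (\<lambda>\<omega>. ln (quad_poly Q a b (\<chi> i. X i \<omega>))) + C1"
proof -
  interpret prob_space M by fact
  obtain ls where ls: "\<And>x. quad_poly Q a b x = (\<Sum>(l, c)\<leftarrow>ls. ((\<Sum>i\<in>UNIV. l i * x $ i) + c)\<^sup>2)"
    using quad_poly_sum_of_affine_squares[OF symQ nonneg] by blast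
  define terms where "terms = filter (\<lambda>(l, c). (\<exists>i\<in>UNIV. l i \<noteq> 0) \<or> c \<noteq> 0) ls"
  have P: "quad_poly Q a b x = (\<Sum>(l, c)\<leftarrow>terms. ((\<Sum>i\<in>UNIV. l i * x $ i) + c)\<^sup>2)" for x
    unfolding ls terms_def by (rule sum_list_map_filter[symmetric]) auto
  have "terms \<noteq> []"
    using nonzero unfolding P by auto
  define T where "T = (\<lambda>(l, c) \<omega>. ((\<Sum>i\<in>UNIV. l i * X i \<omega>) + c)\<^sup>2)"
  have "jensen_gap_ln_le C1 (\<lambda>\<omega>. \<Sum>p\<leftarrow>terms. T p \<omega>)"
    using \<open>terms \<noteq> []\<close> indep sigma_pos gauss
    by (intro jensen_gap_ln_le_sum_list) (auto simp: terms_def T_def intro!: jensen_gap_ln_le_sq_affine_normal[where \<mu>=\<mu> and \<sigma>=\<sigma>])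
  moreover have "quad_poly Q a b (\<chi> i. X i \<omega>) = (\<Sum>p\<leftarrow>terms. T p \<omega>)" for \<omega>
    unfolding P T_def by (simp add: case_prod_unfold)
  ultimately show ?thesis
    using expectation_ln_le_ln_expectation unfolding jensen_gap_ln_le_def by simp
qed

end
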